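(* Let $S$ be a string of length $n$ over a totally ordered alphabet, let $i\in[1,n]$ and $j=\mathrm{nss}[i]\ne n+1$. If $\mathrm{rlce}(i,j)\ge j-i$, then $\mathrm{rlce}(j,j+(j-i))=\mathrm{rlce}(i,j)-(j-i)$ and $\mathrm{nss}[j]=j+(j-i)$.
   Context: For $i\in[1,n+1]$, $S_i=S[i..n]$ ($S_{n+1}$ is the empty string); $\prec$ is the induced lexicographical order. $\mathrm{nss}[i]=\min\{j \mid j=n+1 \text{ or } (j\in(i,n] \text{ and } S_i\succ S_j)\}$ for $i\in[1,n]$. $\mathrm{rlce}(a,b)$ is the length of the longest common prefix of $S_a$ and $S_b$. *)

theory Defs
  imports Main "HOL-Library.List_Lexorder"
begin

text \<open>Strings are lists over a linearly ordered alphabet; positions are 1-based.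
  The order on lists (List_Lexorder) is the lexicographic order in which a proper
  prefix is smaller.\<close>

definition suf :: "'a list \<Rightarrow> nat \<Rightarrow> 'a list" where
  "suf S i = drop (i - 1) S"

fun lcp :: "'a list \<Rightarrow> 'a list \<Rightarrow> nat" where
  "lcp (x # xs) (y # ys) = (if x = y then Suc (lcp xs ys) else 0)"
| "lcp _ _ = 0"

definition rlce :: "'a list \<Rightarrow> nat \<Rightarrow> nat \<Rightarrow> nat" where
  "rlce S a b = lcp (suf S a) (suf S b)"

definition nss :: "'a::linorder list \<Rightarrow> nat \<Rightarrow> nat" where
  "nss S i = (LEAST j. j = length S + 1 \<or>
                 (i < j \<and> j \<le> length S \<and> suf S j < suf S i))"

end

theory Submission
  imports Defs "HOL-Library.Sublist"
begin

(* Write d = j - i and u = S[i..j-1].  Since rlce(i, j) >= d, both S_i = u S_j and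
   S_j = u S_{j+d}, which gives the lcp identity and S_{j+d} < S_j.  For j < k < j + d put
   m = k - d and v = S[m..j-1], a proper suffix of u; then S_m = v S_j and S_k = v S_{j+d}.
   Minimality of nss[i] forces v not to be a prefix of u: otherwise S_i < S_m would give
   S_{i+|v|} < S_j, while S_i <= S_{i+|v|}, contradicting S_j < S_i.  So u and v differ
   within their common length, and S_i <= S_m carries over verbatim to S_j <= S_k. *)

lemma lcp_le_length: "lcp xs ys \<le> length xs"
  by (induction xs ys rule: lcp.induct) auto

lemma take_eq_if_le_lcp: "n \<le> lcp xs ys \<Longrightarrow> take n xs = take n ys"
proof (induction xs ys arbitrary: n rule: lcp.induct)
  case (1 x xs y ys)
  then show ?case by (cases n) (auto split: if_splits)
qed auto

lemma lcp_append_same: "lcp (p @ xs) (p @ ys) = length p + lcp xs ys"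
  by (induction p) auto

lemma less_append_same_iff: "p @ xs < p @ ys \<longleftrightarrow> xs < (ys :: 'a::linorder list)"
  by (induction p) auto

lemma parallel_append_less_iff:
  fixes v w :: "'a::linorder list"
  assumes "v \<parallel> w"
  shows "v @ x < w @ y \<longleftrightarrow> v @ x' < w @ y'"
proof -
  obtain as b bs c cs where "b \<noteq> c" "v = as @ b # bs" "w = as @ c # cs"
    using parallel_decomp[OF assms] by blast
  then show ?thesis by (simp add: less_append_same_iff)
qed

lemma length_suf: "length (suf S i) = length S - (i - 1)"
  by (simp add: suf_def)

lemma drop_suf: "1 \<le> i \<Longrightarrow> drop e (suf S i) = suf S (i + e)"
  by (simp add: suf_def add.commute)

lemma suf_eq_take_append: "1 \<le> i \<Longrightarrow> suf S i = take e (suf S i) @ suf S (i + e)"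
  by (metis append_take_drop_id drop_suf)

lemma nssD:
  fixes S :: "'a::linorder list"
  assumes "j = nss S i" "j \<noteq> length S + 1"
  shows "i < j" "j \<le> length S" "suf S j < suf S i"
    and "\<And>k. i < k \<Longrightarrow> k < j \<Longrightarrow> \<not> suf S k < suf S i"
proof -
  let ?P = "\<lambda>j. j = length S + 1 \<or> (i < j \<and> j \<le> length S \<and> suf S j < suf S i)"
  have "?P j"
    unfolding assms(1) nss_def by (rule LeastI[of ?P "length S + 1"]) simp
  then show "i < j" "j \<le> length S" "suf S j < suf S i"
    using assms(2) by auto
  then show "\<not> suf S k < suf S i" if "i < k" "k < j" for k
    using not_less_Least[of k ?P] that unfolding assms(1) nss_def by auto
qed

lemma nss_eqI:
  fixes S :: "'a::linorder list"
  assumes "i < j" "j \<le> length S + 1" "suf S j < suf S i"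
    and "\<And>k. i < k \<Longrightarrow> k < j \<Longrightarrow> \<not> suf S k < suf S i"
  shows "nss S i = j"
  unfolding nss_def
proof (rule Least_equality)
  show "j = length S + 1 \<or> i < j \<and> j \<le> length S \<and> suf S j < suf S i"
    using assms(1-3) by auto
  show "j \<le> k" if "k = length S + 1 \<or> i < k \<and> k \<le> length S \<and> suf S k < suf S i" for k
    using that assms(2,4) by (meson not_le)
qed

lemma suf_period_decomp:
  assumes "1 \<le> i" "i \<le> j" "j - i \<le> rlce S i j"
  obtains u where "length u = j - i" "suf S i = u @ suf S j"
    "suf S j = u @ suf S (j + (j - i))"
proof
  let ?d = "j - i"
  show "length (take ?d (suf S i)) = ?d"
    using assms(3) lcp_le_length[of "suf S i" "suf S j"] unfolding rlce_def by simp
  show "suf S i = take ?d (suf S i) @ suf S j"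
    using suf_eq_take_append[OF assms(1), of S ?d] assms(2) by simp
  have "take ?d (suf S i) = take ?d (suf S j)"
    using assms(3) unfolding rlce_def by (rule take_eq_if_le_lcp)
  then show "suf S j = take ?d (suf S i) @ suf S (j + ?d)"
    using suf_eq_take_append[of j S ?d] assms(1,2) by simp
qed

lemma nss_no_prefix_between:
  fixes S :: "'a::linorder list"
  assumes "1 \<le> i" "j = nss S i" "j \<noteq> length S + 1" "i < m" "m < j"
    and "suf S m = v @ suf S j"
  shows "\<not> prefix v (suf S i)"
proof
  assume "prefix v (suf S i)"
  have len_v: "length v = j - m"
    using arg_cong[OF assms(6), of length] nssD(2)[OF assms(2,3)] assms(2,4,5) length_suf[of S]
    by simp
  let ?l = "i + (j - m)"
  have "suf S i = v @ suf S ?l"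
    using \<open>prefix v (suf S i)\<close> suf_eq_take_append[OF assms(1), of S "j - m"] len_v
    by (metis append_eq_conv_conj prefix_def)
  have "length (suf S m) < length (suf S i)"
    using nssD(2)[OF assms(2,3)] assms(1,2,4,5) length_suf[of S] by simp
  then have "suf S i < suf S m"
    using nssD(4)[OF assms(2,3)] assms(2,4,5) by (metis less_irrefl neqE)
  then have "suf S ?l < suf S j"
    using \<open>suf S i = v @ suf S ?l\<close> assms(6) less_append_same_iff by metis
  moreover have "\<not> suf S ?l < suf S i"
    using nssD(4)[OF assms(2,3)] assms(2,4,5) by simp
  ultimately have "suf S i < suf S j" by simp
  then show False
    using nssD(3)[OF assms(2,3)] assms(2) by simp
qed

lemma nss_not_less_within_period:
  fixes S :: "'a::linorder list"
  assumes "1 \<le> i" "j = nss S i" "j \<noteq> length S + 1" "j - i \<le> rlce S i j"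
    and "j < k" "k < j + (j - i)"
  shows "\<not> suf S k < suf S j"
proof -
  have "i < j"
    using nssD(1)[OF assms(2,3)] .
  obtain u where u: "length u = j - i" "suf S i = u @ suf S j"
    "suf S j = u @ suf S (j + (j - i))"
    using suf_period_decomp[OF assms(1) _ assms(4)] \<open>i < j\<close> by auto
  define m where "m = k - (j - i)"
  have m: "i < m" "m < j"
    using assms(5,6) \<open>i < j\<close> unfolding m_def by auto
  define v where "v = drop (m - i) u"
  have suf_m: "suf S m = v @ suf S j"
    using drop_suf[OF assms(1), of "m - i" S] u(1,2) m unfolding v_def by simp
  have suf_k: "suf S k = v @ suf S (j + (j - i))"
    using drop_suf[of j "m - i" S] u(1,3) m assms(1,5) unfolding v_def m_def by simp
  have "\<not> prefix v u"
    using nss_no_prefix_between[OF assms(1-3) m suf_m] u(2) prefix_prefix by metis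
  moreover have "\<not> prefix u v"
    using prefix_length_le[of u v] u(1) m unfolding v_def by auto
  ultimately have "v \<parallel> u" by blast
  moreover have "\<not> suf S m < suf S i"
    using nssD(4)[OF assms(2,3)] m .
  ultimately show ?thesis
    using suf_m suf_k u(2,3) parallel_append_less_iff by metis
qed

theorem lemma10:
  fixes S :: "'a::linorder list" and i j :: nat
  assumes "1 \<le> i" and "i \<le> length S"
    and "j = nss S i" and "j \<noteq> length S + 1"
    and "rlce S i j \<ge> j - i"
  shows "rlce S j (j + (j - i)) = rlce S i j - (j - i)
         \<and> nss S j = j + (j - i)"
proof -
  note j = nssD[OF assms(3,4)]
  obtain u where u: "length u = j - i" "suf S i = u @ suf S j"
    "suf S j = u @ suf S (j + (j - i))"
    using suf_period_decomp[OF assms(1) _ assms(5)] j(1) by auto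
  have "rlce S i j = (j - i) + rlce S j (j + (j - i))"
    unfolding rlce_def by (subst u(2), subst u(3)) (simp add: lcp_append_same u(1))
  moreover have "nss S j = j + (j - i)"
  proof (rule nss_eqI)
    show "j + (j - i) \<le> length S + 1"
      using arg_cong[OF u(3), of length] u(1) j(2) length_suf[of S] by simp
    show "suf S (j + (j - i)) < suf S j"
      using j(3) u(2,3) less_append_same_iff by metis
  qed (use j(1) nss_not_less_within_period[OF assms(1,3,4,5)] in auto)
  ultimately show ?thesis by simp
qed

end
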